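(* Let $m\ge 2$ be an integer, let $B\subseteq m\mathbb Z$ be finite, and let $F\subseteq\mathbb Z$ be a finite nonempty set whose elements all lie in a single congruence class modulo $m$ different from $0\bmod m$. If there exists $W\subseteq\mathbb Z$ with $m\mathbb Z_-\setminus B=F+W$, then $C=m\mathbb N\cup B\cup F$ arises as a minimal additive complement in $\mathbb Z$.
   Context: $\mathbb N=\{0,1,2,\dots\}$, $m\mathbb N=\{mk:k\in\mathbb N\}$, and $m\mathbb Z_-=\{mk:k\in\mathbb Z,\ k<0\}$. For $C,W\subseteq\mathbb Z$, $C+W=\{c+w:c\in C,w\in W\}$. $C$ is a minimal additive complement (MAC) to $W$ if $C+W=\mathbb Z$ and no proper subset $C'\subsetneq C$ satisfies $C'+W=\mathbb Z$. $C$ arises as a MAC if there exists $W\subseteq\mathbb Z$ to which $C$ is a MAC. *)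

theory Defs
  imports Main
begin

definition sumset :: "int set \<Rightarrow> int set \<Rightarrow> int set" where
  "sumset C W = {c + w | c w. c \<in> C \<and> w \<in> W}"

definition is_MAC :: "int set \<Rightarrow> int set \<Rightarrow> bool" where
  "is_MAC C W \<longleftrightarrow> sumset C W = UNIV \<and> (\<forall>C'. C' \<subset> C \<longrightarrow> sumset C' W \<noteq> UNIV)"

definition arises_as_MAC :: "int set \<Rightarrow> bool" where
  "arises_as_MAC C \<longleftrightarrow> (\<exists>W. is_MAC C W)"

end

(*
  Work modulo m: C meets only the residue classes 0 (namely mN and B) and r (namely F).
  Let W be the union of {0}, of a set V inside -r + mZ with F + V = mZ_- - B, and of all
  residue classes other than 0 and -r. A multiple of m is then either c + 0 with c in mN or B,
  or f + v with f in F and v in V, and these two sets are disjoint; so every element of mN and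
  of B is indispensable. The class -r is covered by mN + V because V is unbounded below, the
  remaining classes by 0 plus the third part of W.
  An element g of F is indispensable as soon as some x has g as its only F-summand with
  respect to V. Such a V arises from the given W by keeping it above some level and replacing
  it below by the whole class -r + mZ minus the points t g - h (h in F, h distinct from g),
  where the t g are multiples of m spaced more than 2 diam F apart: then t g is represented
  only through g, and a counting argument shows that no y has all of y - F removed.
*)
theory Submission
  imports Defs
begin

lemma sumset_iff: "y \<in> sumset C W \<longleftrightarrow> (\<exists>c\<in>C. \<exists>w\<in>W. y = c + w)"
  unfolding sumset_def by auto

lemma mem_neg_multiples_iff:
  fixes m y :: int
  assumes "0 < m"
  shows "y \<in> {m * k | k. k < 0} \<longleftrightarrow> m dvd y \<and> y < 0"
proof
  assume "y \<in> {m * k | k. k < 0}"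
  with assms show "m dvd y \<and> y < 0" by (auto simp: mult_pos_neg)
next
  assume "m dvd y \<and> y < 0"
  with assms have "y = m * (y div m)" "y div m < 0" by (auto simp: pos_imp_zdiv_neg_iff)
  then show "y \<in> {m * k | k. k < 0}" by blast
qed

lemma mem_nonneg_multiples_iff:
  fixes m y :: int
  assumes "0 < m"
  shows "y \<in> {m * int k | k. True} \<longleftrightarrow> m dvd y \<and> 0 \<le> y"
proof
  assume "m dvd y \<and> 0 \<le> y"
  with assms have "y = m * int (nat (y div m))" by (simp add: pos_imp_zdiv_nonneg_iff)
  then show "y \<in> {m * int k | k. True}" by blast
qed (use assms in auto)

lemma ex_multiple_less:
  fixes m x :: int
  assumes "0 < m"
  shows "\<exists>z. m dvd z \<and> z < x"
proof
  have "m * (- \<bar>x\<bar> - 1) \<le> 1 * (- \<bar>x\<bar> - 1)"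
    using assms by (intro mult_right_mono_neg) auto
  then show "m dvd m * (- \<bar>x\<bar> - 1) \<and> m * (- \<bar>x\<bar> - 1) < x" by simp
qed

definition forbidden :: "(int \<Rightarrow> int) \<Rightarrow> int set \<Rightarrow> int set" where
  "forbidden t F = {t g - h | g h. g \<in> F \<and> h \<in> F \<and> h \<noteq> g}"

lemma diff_self_notin_forbidden:
  fixes t :: "int \<Rightarrow> int" and F :: "int set" and D :: int
  assumes diam: "\<forall>f\<in>F. \<forall>h\<in>F. f \<le> h + D"
    and spread: "\<forall>g\<in>F. \<forall>g'\<in>F. g < g' \<longrightarrow> t g + 2 * D < t g'"
    and "g \<in> F"
  shows "t g - g \<notin> forbidden t F"
proof
  assume "t g - g \<in> forbidden t F"
  then obtain g' h where gh: "t g - g = t g' - h" "g' \<in> F" "h \<in> F" "h \<noteq> g'"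
    unfolding forbidden_def by blast
  have "g \<noteq> g'" using gh(1,4) by auto
  then have "t g + 2 * D < t g' \<or> t g' + 2 * D < t g"
    using spread gh(2) \<open>g \<in> F\<close> by (meson linorder_neqE)
  moreover have "g \<le> h + D" "h \<le> g + D" using diam gh(3) \<open>g \<in> F\<close> by auto
  ultimately show False using gh(1) by linarith
qed

lemma ex_diff_notin_forbidden:
  fixes t :: "int \<Rightarrow> int" and F :: "int set" and D y :: int
  assumes "finite F" "F \<noteq> {}"
    and diam: "\<forall>f\<in>F. \<forall>h\<in>F. f \<le> h + D"
    and spread: "\<forall>g\<in>F. \<forall>g'\<in>F. g < g' \<longrightarrow> t g + 2 * D < t g'"
  shows "\<exists>f\<in>F. y - f \<notin> forbidden t F"
proof (rule ccontr)
  assume "\<not> ?thesis"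
  then have all: "\<forall>f\<in>F. \<exists>g h. y - f = t g - h \<and> g \<in> F \<and> h \<in> F \<and> h \<noteq> g"
    unfolding forbidden_def by blast
  obtain f0 where "f0 \<in> F" using \<open>F \<noteq> {}\<close> by blast
  then obtain g0 h0 where g0: "y - f0 = t g0 - h0" "g0 \<in> F" "h0 \<in> F"
    using all by blast
  \<comment> \<open>The spread of \<open>t\<close> forces all the differences \<open>y - f\<close> into the cluster around \<open>t g0\<close>,
      which has only \<open>card F - 1\<close> elements.\<close>
  have "F \<subseteq> (\<lambda>h. y - t g0 + h) ` (F - {g0})"
  proof
    fix f assume "f \<in> F"
    then obtain g h where gh: "y - f = t g - h" "g \<in> F" "h \<in> F" "h \<noteq> g"
      using all by blast
    have "g = g0"
    proof (rule ccontr)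
      assume "g \<noteq> g0"
      then have "t g + 2 * D < t g0 \<or> t g0 + 2 * D < t g"
        using spread gh(2) g0(2) by (meson linorder_neqE)
      moreover have "h \<le> h0 + D" "h0 \<le> h + D" "f \<le> f0 + D" "f0 \<le> f + D"
        using diam gh(3) g0(3) \<open>f \<in> F\<close> \<open>f0 \<in> F\<close> by auto
      ultimately show False using gh(1) g0(1) by linarith
    qed
    with gh show "f \<in> (\<lambda>h. y - t g0 + h) ` (F - {g0})" by force
  qed
  then have "card F \<le> card (F - {g0})"
    using \<open>finite F\<close> by (meson card_image_le card_mono finite_Diff finite_imageI order_trans)
  with \<open>finite F\<close> \<open>g0 \<in> F\<close> show False using card_Diff1_less by fastforce
qed

lemma ex_sparse_multiples:
  fixes m D b c :: int
  assumes "0 < m" "0 \<le> D"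
  shows "\<exists>t. (\<forall>g. m dvd t g) \<and> (\<forall>g\<le>b. t g < c) \<and> (\<forall>g g'. g < g' \<longrightarrow> t g + 2 * D < t g')"
proof -
  obtain \<mu> where "m dvd \<mu>" "\<mu> < c" using ex_multiple_less \<open>0 < m\<close> by blast
  define t where "t g = m * (2 * D + 1) * (g - b) + \<mu>" for g
  have "t g + 2 * D < t g'" if "g < g'" for g g'
  proof -
    have "m * 1 \<le> m * (g' - g)" using that \<open>0 < m\<close> by (intro mult_left_mono) auto
    then have "(2 * D + 1) * 1 \<le> (2 * D + 1) * (m * (g' - g))"
      using \<open>0 < m\<close> \<open>0 \<le> D\<close> by (intro mult_left_mono) linarith+
    then show ?thesis by (simp add: t_def algebra_simps)
  qed
  moreover have "t g < c" if "g \<le> b" for g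
  proof -
    have "m * (2 * D + 1) * (g - b) \<le> 0"
      using that \<open>0 < m\<close> \<open>0 \<le> D\<close> by (intro mult_nonneg_nonpos) auto
    with \<open>\<mu> < c\<close> show ?thesis by (simp add: t_def)
  qed
  moreover have "m dvd t g" for g using \<open>m dvd \<mu>\<close> by (simp add: t_def)
  ultimately show ?thesis by blast
qed

lemma sumset_eq_after_replacing_tail:
  fixes m a b L w0 :: int and F T W0 X :: "int set"
  assumes ab: "\<forall>f\<in>F. a \<le> f \<and> f \<le> b"
    and W0: "sumset F W0 = T" and T_dvd: "\<forall>y\<in>T. m dvd y"
    and tail: "\<forall>y. m dvd y \<and> y < L + b \<longrightarrow> y \<in> T"
    and w0: "\<forall>f\<in>F. m dvd (f + w0)"
    and avoid: "\<forall>y. \<exists>f\<in>F. y - f \<notin> X"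
  shows "sumset F ({w \<in> W0. L - (b - a) \<le> w} \<union> {w. m dvd (w - w0) \<and> w < L \<and> w \<notin> X}) = T"
    (is "sumset F ?V = T")
proof
  have "f + w \<in> T" if "f \<in> F" "w \<in> ?V" for f w
  proof (cases "w \<in> W0")
    case True
    with that show ?thesis unfolding W0[symmetric] sumset_iff by blast
  next
    case False
    with that have w: "m dvd (w - w0)" "w < L" by auto
    have "f + w = (f + w0) + (w - w0)" by simp
    then have "m dvd (f + w)" using w w0 \<open>f \<in> F\<close> by (metis dvd_add)
    moreover have "f + w < L + b" using w ab \<open>f \<in> F\<close> by fastforce
    ultimately show ?thesis using tail by blast
  qed
  then show "sumset F ?V \<subseteq> T" unfolding sumset_def by blast
next
  show "T \<subseteq> sumset F ?V"
  proof
    fix y assume y: "y \<in> T"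
    show "y \<in> sumset F ?V"
    proof (cases "L + a \<le> y")
      case True
      obtain f w where fw: "f \<in> F" "w \<in> W0" "y = f + w"
        using y unfolding W0[symmetric] sumset_iff by blast
      then have "L - (b - a) \<le> w" using True ab by fastforce
      with fw show ?thesis unfolding sumset_iff by blast
    next
      case False
      obtain f where "f \<in> F" "y - f \<notin> X" using avoid by blast
      moreover have "m dvd (y - f - w0)"
        using dvd_diff[of m y "f + w0"] T_dvd y w0 \<open>f \<in> F\<close> by (simp add: diff_diff_eq)
      moreover have "y - f < L" using False ab \<open>f \<in> F\<close> by fastforce
      ultimately have "y - f \<in> ?V" by blast
      then have "f + (y - f) \<in> sumset F ?V" using \<open>f \<in> F\<close> unfolding sumset_iff by blast
      then show ?thesis by simp
    qed
  qed
qed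

lemma ex_add_dvd_of_sumset_dvd:
  fixes m :: int and F W :: "int set"
  assumes "\<forall>y\<in>sumset F W. m dvd y" and "sumset F W \<noteq> {}"
  shows "\<exists>w. \<forall>f\<in>F. m dvd (f + w)"
proof -
  obtain w where "w \<in> W" using \<open>sumset F W \<noteq> {}\<close> unfolding sumset_def by blast
  have "m dvd (f + w)" if "f \<in> F" for f
  proof -
    from that \<open>w \<in> W\<close> have "f + w \<in> sumset F W" unfolding sumset_iff by blast
    with assms(1) show ?thesis by blast
  qed
  then show ?thesis by blast
qed

lemma ex_summand_with_private_representatives:
  fixes m L0 :: int and F T W0 :: "int set"
  assumes "0 < m" "finite F" "F \<noteq> {}"
    and W0: "sumset F W0 = T" and T_dvd: "\<forall>y\<in>T. m dvd y"
    and tail: "\<forall>y. m dvd y \<and> y < L0 \<longrightarrow> y \<in> T"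
  shows "\<exists>V. sumset F V = T \<and> (\<forall>g\<in>F. \<exists>x. x - g \<in> V \<and> (\<forall>h\<in>F. h \<noteq> g \<longrightarrow> x - h \<notin> V))"
proof -
  define a where "a = Min F"
  define b where "b = Max F"
  define D where "D = b - a"
  have ab: "\<forall>f\<in>F. a \<le> f \<and> f \<le> b" using \<open>finite F\<close> by (simp add: a_def b_def)
  then have diam: "\<forall>f\<in>F. \<forall>h\<in>F. f \<le> h + D" unfolding D_def by (smt (verit))
  have "0 \<le> D" using ab \<open>F \<noteq> {}\<close> D_def by force
  obtain z where "m dvd z" "z < L0" using ex_multiple_less \<open>0 < m\<close> by blast
  with tail W0 have "sumset F W0 \<noteq> {}" by auto
  then obtain w0 where w0: "\<forall>f\<in>F. m dvd (f + w0)"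
    using ex_add_dvd_of_sumset_dvd T_dvd W0 by blast
  define L where "L = L0 - b"
  obtain t where t_dvd: "\<forall>g. m dvd t g" and t_lt: "\<forall>g\<le>b. t g < L - D + a"
    and spread: "\<forall>g g'. g < g' \<longrightarrow> t g + 2 * D < t g'"
    using ex_sparse_multiples \<open>0 < m\<close> \<open>0 \<le> D\<close> by blast
  then have spread_F: "\<forall>g\<in>F. \<forall>g'\<in>F. g < g' \<longrightarrow> t g + 2 * D < t g'" by blast
  have forbidden_lt: "x < L - D" if x: "x \<in> forbidden t F" for x
  proof -
    obtain g h where gh: "x = t g - h" "g \<in> F" "h \<in> F"
      using x unfolding forbidden_def by blast
    then have "t g < L - D + a" using t_lt ab by blast
    with gh ab show ?thesis by fastforce
  qed
  \<comment> \<open>Below \<open>L\<close>, the points \<open>t g - h\<close> with \<open>h \<noteq> g\<close> are removed, so that \<open>t g\<close> keeps \<open>g\<close> as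
      its only summand from \<open>F\<close>.\<close>
  define V where
    "V = {w \<in> W0. L - D \<le> w} \<union> {w. m dvd (w - w0) \<and> w < L \<and> w \<notin> forbidden t F}"
  have "\<forall>y. m dvd y \<and> y < L + b \<longrightarrow> y \<in> T" using tail L_def by simp
  moreover have "\<forall>y. \<exists>f\<in>F. y - f \<notin> forbidden t F"
    using ex_diff_notin_forbidden[OF \<open>finite F\<close> \<open>F \<noteq> {}\<close> diam spread_F] by blast
  ultimately have "sumset F V = T"
    unfolding V_def D_def by (intro sumset_eq_after_replacing_tail[OF ab W0 T_dvd _ w0])
  moreover have "t g - g \<in> V \<and> (\<forall>h\<in>F. h \<noteq> g \<longrightarrow> t g - h \<notin> V)" if "g \<in> F" for g
  proof (intro conjI ballI impI)
    have "m dvd (t g - g - w0)"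
      using dvd_diff[of m "t g" "g + w0"] t_dvd w0 that by (simp add: diff_diff_eq)
    moreover have "t g - g < L" using t_lt ab that \<open>0 \<le> D\<close> by fastforce
    moreover have "t g - g \<notin> forbidden t F"
      using diff_self_notin_forbidden[OF diam spread_F that] .
    ultimately show "t g - g \<in> V" unfolding V_def by blast
  next
    fix h assume "h \<in> F" "h \<noteq> g"
    with that have "t g - h \<in> forbidden t F" unfolding forbidden_def by blast
    with forbidden_lt show "t g - h \<notin> V" unfolding V_def by fastforce
  qed
  ultimately show ?thesis by blast
qed

lemma is_MAC_of_unique_summands:
  fixes C W :: "int set"
  assumes cover: "sumset C W = UNIV"
    and unique: "\<forall>c\<in>C. \<exists>x. \<forall>c'\<in>C. \<forall>w\<in>W. x = c' + w \<longrightarrow> c' = c"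
  shows "is_MAC C W"
proof -
  have "sumset C' W \<noteq> UNIV" if C': "C' \<subset> C" for C'
  proof -
    obtain c where "c \<in> C" "c \<notin> C'" using C' by blast
    then obtain x where "\<forall>c'\<in>C. \<forall>w\<in>W. x = c' + w \<longrightarrow> c' = c" using unique by blast
    then have "x \<notin> sumset C' W" using C' \<open>c \<notin> C'\<close> unfolding sumset_iff by blast
    then show ?thesis by blast
  qed
  with cover show ?thesis unfolding is_MAC_def by blast
qed

lemma sumset_residue_classes_eq_UNIV:
  fixes m r :: int and C0 F V :: "int set"
  assumes C0_dvd: "\<forall>c\<in>C0. m dvd c"
    and FV: "{y. m dvd y} \<subseteq> C0 \<union> sumset F V"
    and shift: "\<forall>y. m dvd (y + r) \<longrightarrow> (\<exists>v\<in>V. y - v \<in> C0)"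
  shows "sumset (C0 \<union> F) ({0} \<union> V \<union> {x. \<not> m dvd x \<and> \<not> m dvd (x + r)}) = UNIV"
    (is "sumset ?C ?W = UNIV")
proof -
  have "y \<in> sumset ?C ?W" for y
  proof -
    consider "m dvd y" | "m dvd (y + r)" | "\<not> m dvd y" "\<not> m dvd (y + r)" by blast
    then show ?thesis
    proof cases
      case 1
      then have "y \<in> C0 \<or> y \<in> sumset F V" using FV by blast
      moreover have "y + 0 \<in> sumset ?C ?W" if "y \<in> C0" using that unfolding sumset_iff by blast
      moreover have "sumset F V \<subseteq> sumset ?C ?W" unfolding sumset_def by blast
      ultimately show ?thesis by auto
    next
      case 2
      then obtain v where "v \<in> V" "y - v \<in> C0" using shift by blast
      then have "(y - v) + v \<in> sumset ?C ?W" unfolding sumset_iff by blast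
      then show ?thesis by simp
    next
      case 3
      obtain c where "c \<in> C0" using shift[rule_format, of "- r"] by auto
      then have "m dvd c" using C0_dvd by blast
      have "y = (y - c) + c" "y + r = (y - c + r) + c" by simp_all
      then have "\<not> m dvd (y - c) \<and> \<not> m dvd (y - c + r)"
        using 3 \<open>m dvd c\<close> by (metis dvd_add)
      then have "c + (y - c) \<in> sumset ?C ?W"
        using \<open>c \<in> C0\<close> unfolding sumset_iff by blast
      then show ?thesis by simp
    qed
  qed
  then show ?thesis by blast
qed

lemma dvd_sum_residue_cases:
  fixes m r c w :: int and C0 F V :: "int set"
  assumes r: "\<not> m dvd r"
    and C0_dvd: "\<forall>c\<in>C0. m dvd c" and F_dvd: "\<forall>f\<in>F. m dvd (f - r)"
    and V_dvd: "\<forall>v\<in>V. m dvd (v + r)"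
    and c: "c \<in> C0 \<union> F" and w: "w \<in> {0} \<union> V \<union> {x. \<not> m dvd x \<and> \<not> m dvd (x + r)}"
    and cw: "m dvd (c + w)"
  shows "(c \<in> C0 \<and> w = 0) \<or> (c \<in> F \<and> w \<in> V)"
proof (cases "c \<in> C0")
  case True
  then have "m dvd w" using C0_dvd cw by (metis add_diff_cancel_left' dvd_diff)
  moreover have "w \<notin> V" using \<open>m dvd w\<close> V_dvd r by (metis add_diff_cancel_left' dvd_diff)
  ultimately show ?thesis using True w by blast
next
  case False
  with c have "c \<in> F" by blast
  have "w + r = (c + w) - (c - r)" by simp
  then have "m dvd (w + r)" using cw F_dvd \<open>c \<in> F\<close> by (metis dvd_diff)
  moreover have "w \<noteq> 0" using \<open>m dvd (w + r)\<close> r by auto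
  ultimately show ?thesis using \<open>c \<in> F\<close> w by blast
qed

lemma is_MAC_of_private_representatives:
  fixes m r :: int and C0 F V :: "int set"
  assumes r: "\<not> m dvd r"
    and C0_dvd: "\<forall>c\<in>C0. m dvd c" and F_dvd: "\<forall>f\<in>F. m dvd (f - r)"
    and V_dvd: "\<forall>v\<in>V. m dvd (v + r)"
    and FV: "sumset F V = {y. m dvd y} - C0"
    and shift: "\<forall>y. m dvd (y + r) \<longrightarrow> (\<exists>v\<in>V. y - v \<in> C0)"
    and priv: "\<forall>g\<in>F. \<exists>x. x - g \<in> V \<and> (\<forall>h\<in>F. h \<noteq> g \<longrightarrow> x - h \<notin> V)"
  shows "is_MAC (C0 \<union> F) ({0} \<union> V \<union> {x. \<not> m dvd x \<and> \<not> m dvd (x + r)})"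
    (is "is_MAC ?C ?W")
proof (rule is_MAC_of_unique_summands)
  show "sumset ?C ?W = UNIV"
  proof (rule sumset_residue_classes_eq_UNIV[OF C0_dvd _ shift])
    show "{y. m dvd y} \<subseteq> C0 \<union> sumset F V" unfolding FV by blast
  qed
  note cases = dvd_sum_residue_cases[OF r C0_dvd F_dvd V_dvd]
  show "\<forall>c\<in>?C. \<exists>x. \<forall>c'\<in>?C. \<forall>w\<in>?W. x = c' + w \<longrightarrow> c' = c"
  proof
    fix c assume "c \<in> ?C"
    show "\<exists>x. \<forall>c'\<in>?C. \<forall>w\<in>?W. x = c' + w \<longrightarrow> c' = c"
    proof (cases "c \<in> C0")
      case True
      then have "c \<notin> sumset F V" "m dvd c" unfolding FV using C0_dvd by auto
      have "c' = c" if "c' \<in> C0 \<union> F" "w \<in> ?W" "c = c' + w" for c' w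
      proof -
        have "c' \<notin> F \<or> w \<notin> V" using \<open>c \<notin> sumset F V\<close> that(3) unfolding sumset_iff by blast
        then show ?thesis using cases[OF that(1,2)] \<open>m dvd c\<close> that(3) by auto
      qed
      then show ?thesis by blast
    next
      case False
      with \<open>c \<in> ?C\<close> have "c \<in> F" by blast
      then obtain x where x: "x - c \<in> V" "\<forall>h\<in>F. h \<noteq> c \<longrightarrow> x - h \<notin> V" using priv by blast
      have "c + (x - c) \<in> sumset F V" using \<open>c \<in> F\<close> x(1) unfolding sumset_iff by blast
      then have "m dvd x" "x \<notin> C0" unfolding FV by auto
      have "c' = c" if "c' \<in> C0 \<union> F" "w \<in> ?W" "x = c' + w" for c' w
        using cases[OF that(1,2)] x(2) that(3) \<open>m dvd x\<close> \<open>x \<notin> C0\<close> by force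
      then show ?thesis by blast
    qed
  qed
qed

lemma neg_multiples_diff_eq:
  fixes m :: int and B :: "int set"
  assumes "0 < m"
  shows "{m * k | k. k < 0} - B = {y. m dvd y} - ({m * int k | k. True} \<union> B)"
  unfolding set_eq_iff Diff_iff Un_iff mem_neg_multiples_iff[OF assms] mem_nonneg_multiples_iff[OF assms]
  by auto

lemma ex_tail_subset_neg_multiples_diff:
  fixes m :: int and B :: "int set"
  assumes "0 < m" "finite B"
  shows "\<exists>L0. \<forall>y. m dvd y \<and> y < L0 \<longrightarrow> y \<in> {m * k | k. k < 0} - B"
proof -
  obtain M where "\<forall>b\<in>B. M \<le> b"
    using bdd_below_finite[OF \<open>finite B\<close>] unfolding bdd_below_def by blast
  then have "\<forall>y. m dvd y \<and> y < min M 0 \<longrightarrow> y \<in> {m * k | k. k < 0} - B"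
    using mem_neg_multiples_iff[OF \<open>0 < m\<close>] by force
  then show ?thesis by blast
qed

lemma summands_dvd_add:
  fixes m r :: int and F V :: "int set"
  assumes FV: "\<forall>y\<in>sumset F V. m dvd y" and "f \<in> F" "m dvd (f - r)"
  shows "\<forall>v\<in>V. m dvd (v + r)"
proof
  fix v assume "v \<in> V"
  with \<open>f \<in> F\<close> have "f + v \<in> sumset F V" unfolding sumset_iff by blast
  with FV have "m dvd (f + v)" by blast
  then have "m dvd ((f + v) - (f - r))" using \<open>m dvd (f - r)\<close> by (rule dvd_diff)
  then show "m dvd (v + r)" by simp
qed

lemma ex_summand_shift_to_nonneg_multiple:
  fixes m r L0 y :: int and F V :: "int set"
  assumes "0 < m" "finite F"
    and tail: "\<forall>z. m dvd z \<and> z < L0 \<longrightarrow> z \<in> sumset F V"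
    and V_dvd: "\<forall>v\<in>V. m dvd (v + r)" and "m dvd (y + r)"
  shows "\<exists>v\<in>V. y - v \<in> {m * int k | k. True}"
proof -
  obtain z where z: "m dvd z" "z < min L0 (y + Min F)" using ex_multiple_less \<open>0 < m\<close> by blast
  then obtain f v where "f \<in> F" "v \<in> V" "z = f + v"
    using tail unfolding sumset_iff by auto
  moreover have "Min F \<le> f" using \<open>finite F\<close> \<open>f \<in> F\<close> by simp
  ultimately have "0 \<le> y - v" using z by linarith
  moreover have "m dvd ((y + r) - (v + r))"
    using dvd_diff[OF \<open>m dvd (y + r)\<close> V_dvd[rule_format, OF \<open>v \<in> V\<close>]] .
  ultimately have "y - v \<in> {m * int k | k. True}"
    using mem_nonneg_multiples_iff[OF \<open>0 < m\<close>, of "y - v"] by simp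
  with \<open>v \<in> V\<close> show ?thesis by blast
qed

theorem proposition3:
  fixes m :: int and B F :: "int set"
  assumes "m \<ge> 2"
    and "finite B" and "\<forall>b\<in>B. m dvd b"
    and "finite F" and "F \<noteq> {}"
    and "\<exists>r. \<not> m dvd r \<and> (\<forall>f\<in>F. f mod m = r mod m)"
    and "\<exists>W. {m * k | k. k < 0} - B = sumset F W"
  shows "arises_as_MAC ({m * int k | k. True} \<union> B \<union> F)"
proof -
  have "0 < m" using assms(1) by simp
  obtain r where r: "\<not> m dvd r" and F_dvd: "\<forall>f\<in>F. m dvd (f - r)"
    using assms(6) by (metis mod_eq_dvd_iff)
  define N where "N = {m * int k | k. True}"
  define T where "T = {m * k | k. k < 0} - B"
  have T_eq: "T = {y. m dvd y} - (N \<union> B)"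
    unfolding T_def N_def using neg_multiples_diff_eq[OF \<open>0 < m\<close>] .
  obtain L0 where tail: "\<forall>y. m dvd y \<and> y < L0 \<longrightarrow> y \<in> T"
    unfolding T_def using ex_tail_subset_neg_multiples_diff[OF \<open>0 < m\<close> \<open>finite B\<close>] by blast
  obtain W0 where W0: "sumset F W0 = T" using assms(7) T_def by metis
  have T_dvd: "\<forall>y\<in>T. m dvd y" using T_eq by blast
  obtain V where FV: "sumset F V = T"
    and priv: "\<forall>g\<in>F. \<exists>x. x - g \<in> V \<and> (\<forall>h\<in>F. h \<noteq> g \<longrightarrow> x - h \<notin> V)"
    using ex_summand_with_private_representatives[OF \<open>0 < m\<close> \<open>finite F\<close> \<open>F \<noteq> {}\<close> W0 T_dvd tail]
    by blast
  obtain f where "f \<in> F" using \<open>F \<noteq> {}\<close> by blast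
  then have V_dvd: "\<forall>v\<in>V. m dvd (v + r)"
    using summands_dvd_add[of F V m, unfolded FV, OF T_dvd] F_dvd by blast
  have "\<forall>z. m dvd z \<and> z < L0 \<longrightarrow> z \<in> sumset F V" using tail FV by simp
  then have shift: "\<forall>y. m dvd (y + r) \<longrightarrow> (\<exists>v\<in>V. y - v \<in> N \<union> B)"
    using ex_summand_shift_to_nonneg_multiple[OF \<open>0 < m\<close> \<open>finite F\<close> _ V_dvd] unfolding N_def by blast
  have NB_dvd: "\<forall>c\<in>N \<union> B. m dvd c" using assms(3) unfolding N_def by auto
  have "sumset F V = {y. m dvd y} - (N \<union> B)" using FV T_eq by simp
  then have "is_MAC (N \<union> B \<union> F) ({0} \<union> V \<union> {x. \<not> m dvd x \<and> \<not> m dvd (x + r)})"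
    by (rule is_MAC_of_private_representatives[OF r NB_dvd F_dvd V_dvd _ shift priv])
  then show ?thesis unfolding arises_as_MAC_def N_def by blast
qed

end
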